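(* Let $(B,\lfloor\cdot,\cdot\rfloor,\|\cdot\|)$ be an SSDB space with quadratic form $q$ and let $A\subset B$ be $q$-positive. The following are equivalent: (1) $A$ is maximally $q$-positive; (2) $A+C=B$ for every maximally $(-q)$-positive set $C\subset B$ such that $\Phi_{-q,C}$ is finite-valued; (3) there exist a set $C\subset B$ with $A+C=B$ and a point $p\in C$ such that $q(z-p)<0$ for all $z\in C\setminus\{p\}$.
   Context: An SSD space is a pair $(B,\lfloor\cdot,\cdot\rfloor)$ with $B$ a nonzero real vector space and $\lfloor\cdot,\cdot\rfloor$ a symmetric bilinear form; $q(b)=\frac12\lfloor b,b\rfloor$. An SSDB space is a triple $(B,\lfloor\cdot,\cdot\rfloor,\|\cdot\|)$ such that $(B,\lfloor\cdot,\cdot\rfloor)$ is an SSD space, $(B,\|\cdot\|)$ is a Banach space, and the map $i:B\to B^*$, $i(b)=\lfloor\cdot,b\rfloor$, is a surjective isometry onto the dual $B^*$. For a quadratic form $Q\in\{q,-q\}$ (note $-q$ is the quadratic form of the SSD space $(B,-\lfloor\cdot,\cdot\rfloor)$): a nonempty set $A$ is $Q$-positive if $Q(b-c)\ge0$ for all $b,c\in A$, and maximally $Q$-positive if it is $Q$-positive and not properly contained in another $Q$-positive set. For nonempty $C\subset B$, $\Phi_{-q,C}(x)=\sup_{c\in C}\{-\lfloor x,c\rfloor+q(c)\}$. *)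

theory Defs
  imports "HOL-Analysis.Analysis"
begin

definition SSD :: "('a::real_vector \<Rightarrow> 'a \<Rightarrow> real) \<Rightarrow> bool" where
  "SSD s \<longleftrightarrow> (\<exists>x::'a. x \<noteq> 0) \<and> bilinear s \<and> (\<forall>x y. s x y = s y x)"

text \<open>SSDB space: additionally the Banach space structure (type class banach) is such that
  i(b) = s(_, b) is a surjective isometry of B onto its dual B* (the bounded linear functionals,
  normed by the operator norm).\<close>
definition SSDB :: "('a::banach \<Rightarrow> 'a \<Rightarrow> real) \<Rightarrow> bool" where
  "SSDB s \<longleftrightarrow> SSD s
     \<and> (\<forall>b. bounded_linear (\<lambda>x. s x b))
     \<and> (\<forall>b. onorm (\<lambda>x. s x b) = norm b)
     \<and> (\<forall>f::'a \<Rightarrow> real. bounded_linear f \<longrightarrow> (\<exists>b. f = (\<lambda>x. s x b)))"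

definition qform :: "('a \<Rightarrow> 'a \<Rightarrow> real) \<Rightarrow> 'a \<Rightarrow> real" where
  "qform s b = s b b / 2"

definition Q_positive :: "('a::real_vector \<Rightarrow> real) \<Rightarrow> 'a set \<Rightarrow> bool" where
  "Q_positive Q A \<longleftrightarrow> A \<noteq> {} \<and> (\<forall>b\<in>A. \<forall>c\<in>A. Q (b - c) \<ge> 0)"

definition max_Q_positive :: "('a::real_vector \<Rightarrow> real) \<Rightarrow> 'a set \<Rightarrow> bool" where
  "max_Q_positive Q A \<longleftrightarrow> Q_positive Q A \<and> (\<forall>A'. Q_positive Q A' \<and> A \<subseteq> A' \<longrightarrow> A' = A)"

definition Phi_negq :: "('a \<Rightarrow> 'a \<Rightarrow> real) \<Rightarrow> 'a set \<Rightarrow> 'a \<Rightarrow> ereal" where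
  "Phi_negq s C x = (SUP c\<in>C. ereal (- s x c + qform s c))"

definition setsum :: "'a::plus set \<Rightarrow> 'a set \<Rightarrow> 'a set" where
  "setsum A C = {a + c | a c. a \<in> A \<and> c \<in> C}"

end

theory Submission
  imports Defs
begin

text \<open>
  The heart is (1) \<open>\<Longrightarrow>\<close> (2). For a maximally \<open>(-q)\<close>-positive \<open>C\<close> with \<open>\<Phi>\<^sub>-\<^sub>q\<^sub>,\<^sub>C\<close> finite, the
  function \<open>g(b) = \<Phi>\<^sub>-\<^sub>q\<^sub>,\<^sub>C(-b)\<close> is convex, lower semicontinuous and dominates \<open>-q\<close>, so by Baire it
  is bounded near \<open>0\<close>. For a maximally \<open>q\<close>-positive \<open>A\<close>, the infimal convolution of \<open>\<Phi>\<^sub>q\<^sub>,\<^sub>A\<close>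
  with \<open>g\<close> is then convex, nonnegative at \<open>0\<close> and bounded near \<open>0\<close>; a Hahn-Banach minorant is
  continuous, hence of the form \<open>\<lfloor>\<cdot>,y\<rfloor>\<close>, and gives
  \<open>(\<lfloor>a,y\<rfloor> - q(a)) + (\<lfloor>c,y\<rfloor> + q(c)) \<le> 0\<close> on \<open>A \<times> C\<close>. Maximality forces \<open>y \<in> A\<close> and \<open>-y \<in> C\<close>,
  so \<open>0 \<in> A + C\<close>, and translating \<open>A\<close> gives \<open>A + C = B\<close>.

  (3) \<open>\<Longrightarrow>\<close> (1): if \<open>A \<union> {b}\<close> is \<open>q\<close>-positive, write \<open>b + p = a + c\<close>; then
  \<open>q(c - p) = q(b - a) \<ge> 0\<close> forces \<open>c = p\<close>, i.e. \<open>b = a\<close>.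

  The other implications use one particular \<open>C\<close>, a maximally \<open>(-q)\<close>-positive set containing
  \<open>{c. -q(c) = \<parallel>c\<parallel>\<^sup>2/2}\<close>. The sandwich with \<open>g = \<parallel>\<cdot>\<parallel>\<^sup>2/2\<close> shows that every maximally
  \<open>q\<close>-positive set meets \<open>{a. q(a) = -\<parallel>a\<parallel>\<^sup>2/2}\<close>; from this one gets \<open>-q = \<parallel>\<cdot>\<parallel>\<^sup>2/2\<close> on all of
  \<open>C\<close>, so \<open>\<Phi>\<^sub>-\<^sub>q\<^sub>,\<^sub>C \<le> \<parallel>\<cdot>\<parallel>\<^sup>2/2\<close> is finite and \<open>q < 0\<close> on \<open>C - {0}\<close>.
\<close>

section \<open>Convex functions on normed spaces\<close>

lemma convex_on_UNIV_midpoint: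
  assumes "convex_on UNIV g"
  shows "2 * g ((1/2) *\<^sub>R (x + y)) \<le> g x + g y"
  using convex_onD[OF assms, of "1/2" x y] by (simp add: scaleR_add_right)

lemma convex_on_half_norm_square: "convex_on UNIV (\<lambda>b::'a::real_normed_vector. (norm b) ^ 2 / 2)"
proof (rule convex_onI)
  fix u :: real and x y :: 'a assume u: "0 < u" "u < 1"
  have "(norm ((1-u) *\<^sub>R x + u *\<^sub>R y)) ^ 2 \<le> ((1-u) * norm x + u * norm y) ^ 2"
    using norm_triangle_ineq[of "(1-u) *\<^sub>R x" "u *\<^sub>R y"] u by (intro power_mono) auto
  also have "\<dots> = (1-u) * (norm x) ^ 2 + u * (norm y) ^ 2 - u * (1-u) * (norm x - norm y) ^ 2"
    by (simp add: power2_eq_square algebra_simps)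
  also have "\<dots> \<le> (1-u) * (norm x) ^ 2 + u * (norm y) ^ 2" using u by simp
  finally show "(norm ((1-u) *\<^sub>R x + u *\<^sub>R y)) ^ 2 / 2 \<le> (1-u) * ((norm x) ^ 2 / 2) + u * ((norm y) ^ 2 / 2)"
    by simp
qed simp

lemma convex_on_SUP:
  fixes f :: "'i \<Rightarrow> 'a::real_vector \<Rightarrow> real"
  assumes "C \<noteq> {}" and cvx: "\<And>c. c \<in> C \<Longrightarrow> convex_on UNIV (f c)"
    and bdd: "\<And>x. bdd_above ((\<lambda>c. f c x) ` C)"
  shows "convex_on UNIV (\<lambda>x. SUP c\<in>C. f c x)"
proof (rule convex_onI)
  fix u :: real and x y :: 'a assume u: "0 < u" "u < 1"
  show "(SUP c\<in>C. f c ((1-u) *\<^sub>R x + u *\<^sub>R y)) \<le> (1-u) * (SUP c\<in>C. f c x) + u * (SUP c\<in>C. f c y)"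
  proof (rule cSUP_least[OF \<open>C \<noteq> {}\<close>])
    fix c assume c: "c \<in> C"
    have "f c ((1-u) *\<^sub>R x + u *\<^sub>R y) \<le> (1-u) * f c x + u * f c y"
      using convex_onD[OF cvx[OF c]] u by simp
    also have "\<dots> \<le> (1-u) * (SUP c\<in>C. f c x) + u * (SUP c\<in>C. f c y)"
      using u c bdd by (intro add_mono mult_left_mono cSUP_upper) auto
    finally show "f c ((1-u) *\<^sub>R x + u *\<^sub>R y) \<le> \<dots>" .
  qed
qed simp

lemma closed_sublevel_SUP:
  fixes f :: "'i \<Rightarrow> 'a::topological_space \<Rightarrow> real"
  assumes "C \<noteq> {}" and cont: "\<And>c. c \<in> C \<Longrightarrow> continuous_on UNIV (f c)"
    and bdd: "\<And>x. bdd_above ((\<lambda>c. f c x) ` C)"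
  shows "closed {x. (SUP c\<in>C. f c x) \<le> n}"
proof -
  have "{x. (SUP c\<in>C. f c x) \<le> n} = (\<Inter>c\<in>C. {x. f c x \<le> n})"
    using cSUP_le_iff[OF \<open>C \<noteq> {}\<close> bdd] by auto
  moreover have "closed {x. f c x \<le> n}" if "c \<in> C" for c
    using cont[OF that] by (intro closed_Collect_le continuous_on_const)
  ultimately show ?thesis by auto
qed

lemma convex_on_inf_convolution:
  fixes f g :: "'a::real_vector \<Rightarrow> real"
  assumes "convex D" "convex_on D f" "convex_on UNIV g" "D \<noteq> {}"
    and bdd: "\<And>x. bdd_below ((\<lambda>b. f b + g (b - x)) ` D)"
  shows "convex_on UNIV (\<lambda>x. INF b\<in>D. f b + g (b - x))" (is "convex_on _ ?h")
proof (rule convex_onI)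
  fix u :: real and x1 x2 :: 'a assume u: "0 < u" "u < 1"
  show "?h ((1-u) *\<^sub>R x1 + u *\<^sub>R x2) \<le> (1-u) * ?h x1 + u * ?h x2"
  proof (rule field_le_epsilon)
    fix e :: real assume "e > 0"
    obtain b1 where b1: "b1 \<in> D" "f b1 + g (b1 - x1) < ?h x1 + e"
      using cINF_less_iff[OF \<open>D \<noteq> {}\<close> bdd, of x1 "?h x1 + e"] \<open>e > 0\<close> by auto
    obtain b2 where b2: "b2 \<in> D" "f b2 + g (b2 - x2) < ?h x2 + e"
      using cINF_less_iff[OF \<open>D \<noteq> {}\<close> bdd, of x2 "?h x2 + e"] \<open>e > 0\<close> by auto
    define b where "b = (1-u) *\<^sub>R b1 + u *\<^sub>R b2"
    have "b \<in> D" using \<open>convex D\<close> b1(1) b2(1) u unfolding b_def by (simp add: convex_alt)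
    have "b - ((1-u) *\<^sub>R x1 + u *\<^sub>R x2) = (1-u) *\<^sub>R (b1 - x1) + u *\<^sub>R (b2 - x2)"
      unfolding b_def by (simp add: algebra_simps)
    then have "g (b - ((1-u) *\<^sub>R x1 + u *\<^sub>R x2)) \<le> (1-u) * g (b1 - x1) + u * g (b2 - x2)"
      using convex_onD[OF \<open>convex_on UNIV g\<close>] u by simp
    moreover have "f b \<le> (1-u) * f b1 + u * f b2"
      using convex_onD[OF \<open>convex_on D f\<close>] b1(1) b2(1) u unfolding b_def by simp
    moreover have "?h ((1-u) *\<^sub>R x1 + u *\<^sub>R x2) \<le> f b + g (b - ((1-u) *\<^sub>R x1 + u *\<^sub>R x2))"
      using bdd \<open>b \<in> D\<close> by (rule cINF_lower)
    moreover have "(1-u) * (f b1 + g (b1 - x1)) + u * (f b2 + g (b2 - x2))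
        \<le> (1-u) * (?h x1 + e) + u * (?h x2 + e)"
      using add_mono[OF mult_left_mono[OF less_imp_le[OF b1(2)]] mult_left_mono[OF less_imp_le[OF b2(2)]]] u
      by simp
    ultimately show "?h ((1-u) *\<^sub>R x1 + u *\<^sub>R x2) \<le> (1-u) * ?h x1 + u * ?h x2 + e"
      by (simp add: algebra_simps)
  qed
qed simp

text \<open>Baire category: the closed symmetric sublevel sets cover the space, so one of them has
  interior, and convexity moves the resulting ball to the origin.\<close>
lemma convex_on_bounded_near_0:
  fixes g :: "'a::banach \<Rightarrow> real"
  assumes cvx: "convex_on UNIV g" and closed: "\<And>n. closed {x. g x \<le> n}"
  obtains M r where "r > 0" "\<And>x. norm x < r \<Longrightarrow> g x \<le> M"
proof -
  define S where "S n = {x. g x \<le> real n} \<inter> uminus ` {x. g x \<le> real n}" for n :: nat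
  have S_iff: "x \<in> S n \<longleftrightarrow> g x \<le> real n \<and> g (- x) \<le> real n" for x n
    unfolding S_def by (force simp: image_iff)
  have "closed (S n)" for n
    unfolding S_def by (intro closed_Int closed closed_negations)
  moreover have "\<Union>(range S) = UNIV"
  proof -
    have "x \<in> S (nat \<lceil>max (g x) (g (- x))\<rceil>)" for x
      using real_nat_ceiling_ge[of "max (g x) (g (- x))"] unfolding S_iff by linarith
    then show ?thesis by blast
  qed
  ultimately obtain n where "interior (S n) \<noteq> {}"
  proof (cases "\<exists>n. interior (S n) \<noteq> {}")
    case False
    have "euclidean interior_of \<Union>(range S) = {}"
    proof (rule Baire_category_alt)
      show "completely_metrizable_space (euclidean :: 'a topology) \<or>
          locally_compact_space (euclidean :: 'a topology) \<and> regular_space (euclidean :: 'a topology)"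
        using completely_metrizable_space_euclidean by blast
      show "closedin euclidean T \<and> euclidean interior_of T = {}" if "T \<in> range S" for T
        using that False \<open>\<And>n. closed (S n)\<close> unfolding euclidean_interior_of closed_closedin by blast
    qed simp
    then show ?thesis using \<open>\<Union>(range S) = UNIV\<close> by simp
  qed blast
  then obtain p e where "e > 0" "ball p e \<subseteq> S n" by (meson ex_in_conv mem_interior)
  have "g x \<le> real n" if "norm x < e" for x
  proof -
    have "p + x \<in> S n" "p - x \<in> S n"
      using that \<open>ball p e \<subseteq> S n\<close> by (auto simp: dist_norm)
    then have "g (p + x) \<le> real n" "g (- (p - x)) \<le> real n" by (auto simp: S_iff)
    moreover have "2 * g x \<le> g (p + x) + g (- (p - x))"
      using convex_on_UNIV_midpoint[OF cvx, of "p + x" "- (p - x)"] by simp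
    ultimately show ?thesis by simp
  qed
  with \<open>e > 0\<close> that show ?thesis by blast
qed

lemma bounded_linear_if_bounded_above_on_ball:
  fixes L :: "'a::real_normed_vector \<Rightarrow> real"
  assumes L: "linear L" and "r > 0" and bound: "\<And>x. norm x < r \<Longrightarrow> L x \<le> K"
  shows "bounded_linear L"
proof -
  have "\<bar>L x\<bar> \<le> norm x * (2 * K / r)" for x
  proof (cases "x = 0")
    case True then show ?thesis using linear_0[OF L] by simp
  next
    case False
    define c where "c = r / (2 * norm x)"
    have "c > 0" using False \<open>r > 0\<close> by (simp add: c_def)
    have "norm (c *\<^sub>R x) < r" "norm (- (c *\<^sub>R x)) < r"
      using False \<open>r > 0\<close> by (simp_all add: c_def)
    then have "c * L x \<le> K" "- (c * L x) \<le> K"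
      using bound linear_scale[OF L] linear_neg[OF L] by (metis real_scaleR_def)+
    then have "\<bar>L x\<bar> \<le> K / c" using \<open>c > 0\<close> by (simp add: field_simps abs_if)
    then show ?thesis using False \<open>r > 0\<close> by (simp add: c_def field_simps)
  qed
  then show ?thesis
    using linear_add[OF L] linear_scale[OF L] by (intro bounded_linear_intro[where K = "2 * K / r"]) auto
qed

lemma onorm_almost_attained:
  fixes f :: "'a::real_normed_vector \<Rightarrow> 'b::real_normed_vector"
  assumes "0 < \<epsilon>" "\<epsilon> \<le> onorm f"
  obtains x where "(onorm f - \<epsilon>) * norm x < norm (f x)"
proof (rule ccontr)
  assume "\<not> thesis"
  then have "norm (f x) \<le> (onorm f - \<epsilon>) * norm x" for x using that[of x] by (meson not_le)
  then have "onorm f \<le> onorm f - \<epsilon>" using assms(2) by (intro onorm_bound) simp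
  then show False using assms(1) by simp
qed

lemma linear_plus_half_norm_square_lower_bound:
  fixes f :: "'a::real_normed_vector \<Rightarrow> real"
  assumes f: "bounded_linear f" and K: "\<And>b. K \<le> f b + (norm b) ^ 2 / 2"
  shows "K \<le> - ((onorm f) ^ 2 / 2)"
proof (rule ccontr)
  define n where "n = onorm f"
  assume "\<not> K \<le> - ((onorm f) ^ 2 / 2)"
  then have \<delta>: "0 < 2 * K + n ^ 2" by (simp add: n_def field_simps)
  have K2: "2 * K \<le> 2 * f b + (norm b) ^ 2" for b using K[of b] by (simp add: field_simps)
  have "n \<noteq> 0"
  proof
    assume "n = 0"
    then show False using K2[of 0] \<delta> linear_simps(3)[OF f] by simp
  qed
  then have "n > 0" using onorm_pos_le[OF f] by (simp add: n_def)
  define \<epsilon> where "\<epsilon> = min (n / 2) ((2 * K + n ^ 2) / (4 * n))"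
  have \<epsilon>: "0 < \<epsilon>" "\<epsilon> \<le> n / 2" "4 * (\<epsilon> * n) \<le> 2 * K + n ^ 2"
    using \<open>n > 0\<close> \<delta> by (auto simp: \<epsilon>_def min_def field_simps)
  obtain x where x: "(n - \<epsilon>) * norm x < \<bar>f x\<bar>"
    using onorm_almost_attained[of \<epsilon> f] \<epsilon>(1,2) \<open>n > 0\<close> by (auto simp: n_def)
  have "x \<noteq> 0" using x \<epsilon> linear_simps(3)[OF f] by auto
  define b where "b = (n / norm x) *\<^sub>R (if f x < 0 then x else - x)"
  have "norm b = n" using \<open>x \<noteq> 0\<close> \<open>n > 0\<close> by (simp add: b_def)
  have "n * (n - \<epsilon>) < (n / norm x) * \<bar>f x\<bar>"
  proof -
    have "(n / norm x) * ((n - \<epsilon>) * norm x) < (n / norm x) * \<bar>f x\<bar>"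
      using x \<open>x \<noteq> 0\<close> \<open>n > 0\<close> by (intro mult_strict_left_mono) auto
    then show ?thesis using \<open>x \<noteq> 0\<close> by simp
  qed
  moreover have "f b = - ((n / norm x) * \<bar>f x\<bar>)"
    using linear_simps[OF f] by (simp add: b_def)
  ultimately have "f b < - (n * (n - \<epsilon>))" by linarith
  then have "2 * f b + (norm b) ^ 2 < - (n ^ 2) + 2 * (\<epsilon> * n)"
    using \<open>norm b = n\<close> by (simp add: power2_eq_square algebra_simps)
  then show False using K2[of b] \<epsilon>(3) \<delta> by linarith
qed

section \<open>Linear minorants of convex functions\<close>

text \<open>Partial linear functionals below \<open>\<phi> - \<phi> 0\<close> are encoded by their graphs, so that a chain
  of extensions is bounded by its union.\<close>
definition dominated_linear_graph :: "('a::real_vector \<Rightarrow> real) \<Rightarrow> ('a \<times> real) set \<Rightarrow> bool" where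
  "dominated_linear_graph \<phi> G \<longleftrightarrow> (0, 0) \<in> G
     \<and> (\<forall>x u v. (x, u) \<in> G \<longrightarrow> (x, v) \<in> G \<longrightarrow> u = v)
     \<and> (\<forall>x u y v. (x, u) \<in> G \<longrightarrow> (y, v) \<in> G \<longrightarrow> (x + y, u + v) \<in> G)
     \<and> (\<forall>c x u. (x, u) \<in> G \<longrightarrow> (c *\<^sub>R x, c * u) \<in> G)
     \<and> (\<forall>x u. (x, u) \<in> G \<longrightarrow> u \<le> \<phi> x - \<phi> 0)"

lemma dominated_linear_graphD:
  assumes "dominated_linear_graph \<phi> G"
  shows "(0, 0) \<in> G"
    and "(x, u) \<in> G \<Longrightarrow> (x, v) \<in> G \<Longrightarrow> u = v"
    and "(x, u) \<in> G \<Longrightarrow> (y, v) \<in> G \<Longrightarrow> (x + y, u + v) \<in> G"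
    and "(x, u) \<in> G \<Longrightarrow> (c *\<^sub>R x, c * u) \<in> G"
    and "(x, u) \<in> G \<Longrightarrow> u \<le> \<phi> x - \<phi> 0"
  using assms unfolding dominated_linear_graph_def by blast+

lemma dominated_linear_graph_slopes:
  assumes G: "dominated_linear_graph \<phi> G" and "convex_on UNIV \<phi>"
    and "(m1, u1) \<in> G" "(m2, u2) \<in> G" "s > 0" "t > 0"
  shows "(\<phi> 0 + u1 - \<phi> (m1 - s *\<^sub>R x0)) / s \<le> (\<phi> (m2 + t *\<^sub>R x0) - \<phi> 0 - u2) / t"
proof -
  define u where "u = s / (s + t)"
  have u: "0 \<le> u" "u \<le> 1"
    using \<open>s > 0\<close> \<open>t > 0\<close> by (auto simp: u_def)
  have "((1-u) *\<^sub>R m1 + u *\<^sub>R m2, (1-u) * u1 + u * u2) \<in> G"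
    using dominated_linear_graphD[OF G] \<open>(m1, u1) \<in> G\<close> \<open>(m2, u2) \<in> G\<close> by blast
  then have "(1-u) * u1 + u * u2 \<le> \<phi> ((1-u) *\<^sub>R m1 + u *\<^sub>R m2) - \<phi> 0"
    by (rule dominated_linear_graphD(5)[OF G])
  also have "(1-u) *\<^sub>R m1 + u *\<^sub>R m2 = (1-u) *\<^sub>R (m1 - s *\<^sub>R x0) + u *\<^sub>R (m2 + t *\<^sub>R x0)"
    using \<open>s > 0\<close> \<open>t > 0\<close> by (simp add: u algebra_simps u_def field_simps)
  also have "\<phi> \<dots> \<le> (1-u) * \<phi> (m1 - s *\<^sub>R x0) + u * \<phi> (m2 + t *\<^sub>R x0)"
    by (rule convex_onD[OF \<open>convex_on UNIV \<phi>\<close>]) (use u in auto)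
  finally have "(s + t) * ((1-u) * u1 + u * u2)
      \<le> (s + t) * ((1-u) * \<phi> (m1 - s *\<^sub>R x0) + u * \<phi> (m2 + t *\<^sub>R x0) - \<phi> 0)"
    using \<open>s > 0\<close> \<open>t > 0\<close> by (intro mult_left_mono) auto
  moreover have "(s + t) * (1-u) = t" "(s + t) * u = s"
    using \<open>s > 0\<close> \<open>t > 0\<close> by (simp_all add: u_def field_simps)
  ultimately have "t * u1 + s * u2 \<le> t * \<phi> (m1 - s *\<^sub>R x0) + s * \<phi> (m2 + t *\<^sub>R x0) - (s + t) * \<phi> 0"
    by (simp only: distrib_left right_diff_distrib mult.assoc[symmetric])
  then show ?thesis using \<open>s > 0\<close> \<open>t > 0\<close> by (simp add: field_simps)
qed

definition extend_graph :: "('a::real_vector \<times> real) set \<Rightarrow> 'a \<Rightarrow> real \<Rightarrow> ('a \<times> real) set" where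
  "extend_graph G x0 c = {(m + t *\<^sub>R x0, u + t * c) | m u t. (m, u) \<in> G}"

lemma mem_extend_graph_iff:
  "(x, v) \<in> extend_graph G x0 c \<longleftrightarrow> (\<exists>m u t. (m, u) \<in> G \<and> x = m + t *\<^sub>R x0 \<and> v = u + t * c)"
  unfolding extend_graph_def by blast

lemma extend_graph_memI: "(m, u) \<in> G \<Longrightarrow> (m + t *\<^sub>R x0, u + t * c) \<in> extend_graph G x0 c"
  unfolding mem_extend_graph_iff by blast

lemma extend_graph_single_valued:
  assumes G: "dominated_linear_graph \<phi> G" and x0: "\<forall>u. (x0, u) \<notin> G"
    and "(x, u) \<in> extend_graph G x0 c" "(x, v) \<in> extend_graph G x0 c"
  shows "u = v"
proof -
  note GD = dominated_linear_graphD[OF G]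
  obtain m1 u1 t1 m2 u2 t2 where h: "(m1, u1) \<in> G" "(m2, u2) \<in> G" "x = m1 + t1 *\<^sub>R x0"
    "u = u1 + t1 * c" "x = m2 + t2 *\<^sub>R x0" "v = u2 + t2 * c"
    using assms(3,4) unfolding mem_extend_graph_iff by metis
  have "t1 = t2"
  proof (rule ccontr)
    assume "t1 \<noteq> t2"
    have "(m1 - m2, u1 - u2) \<in> G"
      using GD(3)[OF h(1) GD(4)[OF h(2), of "-1"]] by simp
    then have "((1 / (t2 - t1)) *\<^sub>R (m1 - m2), (1 / (t2 - t1)) * (u1 - u2)) \<in> G"
      by (rule GD(4))
    moreover have "m1 - m2 = (t2 - t1) *\<^sub>R x0" using h by (simp add: algebra_simps)
    ultimately show False using x0 \<open>t1 \<noteq> t2\<close> by simp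
  qed
  then show "u = v" using h GD(2) by auto
qed

lemma dominated_linear_graph_extend_graph:
  assumes G: "dominated_linear_graph \<phi> G" and x0: "\<forall>u. (x0, u) \<notin> G"
    and c: "\<And>m u t. (m, u) \<in> G \<Longrightarrow> t * c \<le> \<phi> (m + t *\<^sub>R x0) - \<phi> 0 - u"
  shows "dominated_linear_graph \<phi> (extend_graph G x0 c)"
  unfolding dominated_linear_graph_def
proof (intro conjI allI impI)
  note GD = dominated_linear_graphD[OF G]
  show "(0, 0) \<in> extend_graph G x0 c" using extend_graph_memI[OF GD(1), of 0] by simp
  show "u = v" if "(x, u) \<in> extend_graph G x0 c" "(x, v) \<in> extend_graph G x0 c" for x u v
    using extend_graph_single_valued[OF G x0 that] .
next
  fix x u y v assume "(x, u) \<in> extend_graph G x0 c" "(y, v) \<in> extend_graph G x0 c"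
  then obtain m1 u1 t1 m2 u2 t2 where h: "(m1, u1) \<in> G" "(m2, u2) \<in> G" "x = m1 + t1 *\<^sub>R x0"
    "u = u1 + t1 * c" "y = m2 + t2 *\<^sub>R x0" "v = u2 + t2 * c"
    unfolding mem_extend_graph_iff by metis
  have "x + y = (m1 + m2) + (t1 + t2) *\<^sub>R x0" "u + v = (u1 + u2) + (t1 + t2) * c"
    using h by (simp_all add: algebra_simps)
  then show "(x + y, u + v) \<in> extend_graph G x0 c"
    using extend_graph_memI[OF dominated_linear_graphD(3)[OF G h(1,2)]] by metis
next
  fix a x u assume "(x, u) \<in> extend_graph G x0 c"
  then obtain m t u1 where h: "(m, u1) \<in> G" "x = m + t *\<^sub>R x0" "u = u1 + t * c"
    unfolding mem_extend_graph_iff by metis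
  have "a *\<^sub>R x = a *\<^sub>R m + (a * t) *\<^sub>R x0" "a * u = a * u1 + (a * t) * c"
    using h by (simp_all add: algebra_simps)
  then show "(a *\<^sub>R x, a * u) \<in> extend_graph G x0 c"
    using extend_graph_memI[OF dominated_linear_graphD(4)[OF G h(1)]] by metis
next
  fix x u assume "(x, u) \<in> extend_graph G x0 c"
  then obtain m t u1 where "(m, u1) \<in> G" "x = m + t *\<^sub>R x0" "u = u1 + t * c"
    unfolding mem_extend_graph_iff by metis
  then show "u \<le> \<phi> x - \<phi> 0" using c[of m u1 t] by simp
qed

text \<open>The slope \<open>c\<close> of the extension in direction \<open>x0\<close> is the supremum of the left difference
  quotients of \<open>\<phi>\<close>, which by convexity lie below all right ones.\<close>
lemma dominated_linear_graph_not_maximal: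
  assumes G: "dominated_linear_graph \<phi> G" and "convex_on UNIV \<phi>" and x0: "\<forall>u. (x0, u) \<notin> G"
  obtains G' where "dominated_linear_graph \<phi> G'" "G \<subset> G'"
proof -
  define Lo where "Lo = {(\<phi> 0 + u - \<phi> (m - s *\<^sub>R x0)) / s | m u s. (m, u) \<in> G \<and> s > 0}"
  define c where "c = Sup Lo"
  note G0 = dominated_linear_graphD(1)[OF G]
  have Lo_mem: "(\<phi> 0 + u - \<phi> (m - s *\<^sub>R x0)) / s \<in> Lo" if "(m, u) \<in> G" "s > 0" for m u s
    unfolding Lo_def using that by blast
  have Lo_le: "l \<le> (\<phi> (m + t *\<^sub>R x0) - \<phi> 0 - u) / t" if "l \<in> Lo" "(m, u) \<in> G" "t > 0" for l m u t
  proof -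
    obtain m' u' s where "l = (\<phi> 0 + u' - \<phi> (m' - s *\<^sub>R x0)) / s" "(m', u') \<in> G" "s > 0"
      using \<open>l \<in> Lo\<close> unfolding Lo_def by blast
    then show ?thesis
      using dominated_linear_graph_slopes[OF G \<open>convex_on UNIV \<phi>\<close>] that by blast
  qed
  have "Lo \<noteq> {}" using Lo_mem[OF G0 zero_less_one] by blast
  have "bdd_above Lo" using Lo_le[OF _ G0 zero_less_one] by (rule bdd_aboveI)
  have c: "t * c \<le> \<phi> (m + t *\<^sub>R x0) - \<phi> 0 - u" if "(m, u) \<in> G" for m u t
  proof (cases t "0 :: real" rule: linorder_cases)
    case less
    have "(\<phi> 0 + u - \<phi> (m - (- t) *\<^sub>R x0)) / (- t) \<le> c"
      unfolding c_def using Lo_mem[OF that, of "- t"] less \<open>bdd_above Lo\<close> by (simp add: cSup_upper)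
    then show ?thesis using less by (simp add: field_simps)
  next
    case equal then show ?thesis using dominated_linear_graphD(5)[OF G that] by simp
  next
    case greater
    have "c \<le> (\<phi> (m + t *\<^sub>R x0) - \<phi> 0 - u) / t"
      unfolding c_def using \<open>Lo \<noteq> {}\<close> Lo_le[OF _ that greater] by (rule cSup_least)
    then show ?thesis using greater by (simp add: field_simps)
  qed
  have "G \<subseteq> extend_graph G x0 c"
  proof
    fix p assume "p \<in> G"
    then show "p \<in> extend_graph G x0 c" using extend_graph_memI[of "fst p" "snd p" G 0] by simp
  qed
  moreover have "(x0, c) \<in> extend_graph G x0 c" using extend_graph_memI[OF G0, of 1] by simp
  ultimately have "G \<subset> extend_graph G x0 c" using x0 by blast
  then show ?thesis using that dominated_linear_graph_extend_graph[OF G x0 c] by blast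
qed

lemma dominated_linear_graph_Union_chain:
  assumes "C \<in> chains {G. dominated_linear_graph \<phi> G}" "C \<noteq> {}"
  shows "dominated_linear_graph \<phi> (\<Union>C)"
proof -
  have dom: "dominated_linear_graph \<phi> G" if "G \<in> C" for G
    using assms(1) that by (simp add: chains_def subset_eq)
  have common: "\<exists>G\<in>C. p \<in> G \<and> p' \<in> G" if p: "p \<in> \<Union>C" "p' \<in> \<Union>C" for p p'
  proof -
    obtain G H where "G \<in> C" "H \<in> C" "p \<in> G" "p' \<in> H" using p by blast
    moreover have "G \<subseteq> H \<or> H \<subseteq> G"
      using assms(1) \<open>G \<in> C\<close> \<open>H \<in> C\<close> by (simp add: chains_def chain_subset_def)
    ultimately show ?thesis by blast
  qed
  show ?thesis
    unfolding dominated_linear_graph_def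
  proof (intro conjI allI impI)
    show "(0, 0) \<in> \<Union>C" using assms(2) dom dominated_linear_graphD(1) by blast
  next
    fix x u v assume "(x, u) \<in> \<Union>C" "(x, v) \<in> \<Union>C"
    then obtain G where "G \<in> C" "(x, u) \<in> G" "(x, v) \<in> G" using common by blast
    then show "u = v" using dom dominated_linear_graphD(2) by blast
  next
    fix x u y v assume "(x, u) \<in> \<Union>C" "(y, v) \<in> \<Union>C"
    then obtain G where "G \<in> C" "(x, u) \<in> G" "(y, v) \<in> G" using common by blast
    then show "(x + y, u + v) \<in> \<Union>C" using dom dominated_linear_graphD(3) by blast
  next
    fix c x u assume "(x, u) \<in> \<Union>C"
    then show "(c *\<^sub>R x, c * u) \<in> \<Union>C" using dom dominated_linear_graphD(4) by blast
  next
    fix x u assume "(x, u) \<in> \<Union>C"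
    then show "u \<le> \<phi> x - \<phi> 0" using dom dominated_linear_graphD(5) by blast
  qed
qed

lemma ex_maximal_dominated_linear_graph:
  obtains M where "dominated_linear_graph \<phi> M"
    "\<And>G. dominated_linear_graph \<phi> G \<Longrightarrow> M \<subseteq> G \<Longrightarrow> G = M"
proof -
  let ?F = "{G. dominated_linear_graph \<phi> G}"
  have chain_bounded: "\<exists>U\<in>?F. \<forall>G\<in>C. G \<subseteq> U" if "C \<in> chains ?F" for C
  proof (cases "C = {}")
    case True
    have "dominated_linear_graph \<phi> {(0, 0)}" by (simp add: dominated_linear_graph_def)
    then show ?thesis using True by blast
  next
    case False
    then show ?thesis using dominated_linear_graph_Union_chain[OF that] by blast
  qed
  have "\<exists>M\<in>?F. \<forall>G\<in>?F. M \<subseteq> G \<longrightarrow> G = M"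
    by (rule Zorn_Lemma2) (use chain_bounded in blast)
  then show ?thesis using that by auto
qed

lemma convex_on_linear_minorant:
  fixes \<phi> :: "'a::real_vector \<Rightarrow> real"
  assumes "convex_on UNIV \<phi>"
  obtains L where "linear L" "\<And>x. L x \<le> \<phi> x - \<phi> 0"
proof -
  obtain M where M: "dominated_linear_graph \<phi> M"
    and max: "\<And>G. dominated_linear_graph \<phi> G \<Longrightarrow> M \<subseteq> G \<Longrightarrow> G = M"
    using ex_maximal_dominated_linear_graph[of \<phi>] by blast
  note M_props = dominated_linear_graphD[OF M]
  have total: "\<exists>u. (x, u) \<in> M" for x
  proof (rule ccontr)
    assume "\<nexists>u. (x, u) \<in> M"
    then obtain G where "dominated_linear_graph \<phi> G" "M \<subset> G"
      using dominated_linear_graph_not_maximal[OF M assms] by blast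
    then show False using max by blast
  qed
  define L where "L x = (THE u. (x, u) \<in> M)" for x
  have L_eq: "L x = u" if "(x, u) \<in> M" for x u
    unfolding L_def using that M_props(2) by (intro the_equality)
  have L_mem: "(x, L x) \<in> M" for x
    using total[of x] L_eq by metis
  have "linear L"
  proof (rule linearI)
    show "L (x + y) = L x + L y" for x y by (rule L_eq[OF M_props(3)[OF L_mem L_mem]])
    show "L (r *\<^sub>R x) = r *\<^sub>R L x" for r x using L_eq[OF M_props(4)[OF L_mem]] by simp
  qed
  moreover have "L x \<le> \<phi> x - \<phi> 0" for x using M_props(5)[OF L_mem] .
  ultimately show ?thesis using that by blast
qed

section \<open>Positive sets\<close>

lemma Q_positiveD: "Q_positive Q A \<Longrightarrow> b \<in> A \<Longrightarrow> c \<in> A \<Longrightarrow> 0 \<le> Q (b - c)"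
  unfolding Q_positive_def by blast

lemma Q_positiveI: "A \<noteq> {} \<Longrightarrow> (\<And>b c. b \<in> A \<Longrightarrow> c \<in> A \<Longrightarrow> 0 \<le> Q (b - c)) \<Longrightarrow> Q_positive Q A"
  unfolding Q_positive_def by blast

lemma max_Q_positiveD:
  "max_Q_positive Q A \<Longrightarrow> Q_positive Q A"
  "max_Q_positive Q A \<Longrightarrow> Q_positive Q A' \<Longrightarrow> A \<subseteq> A' \<Longrightarrow> A' = A"
  unfolding max_Q_positive_def by blast+

lemma max_Q_positive_memI:
  assumes M: "max_Q_positive Q A" and "0 \<le> Q 0"
    and related: "\<And>a. a \<in> A \<Longrightarrow> 0 \<le> Q (b - a) \<and> 0 \<le> Q (a - b)"
  shows "b \<in> A"
proof -
  have "Q_positive Q (insert b A)"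
    using max_Q_positiveD(1)[OF M] related \<open>0 \<le> Q 0\<close> by (auto simp: Q_positive_def)
  then show ?thesis using max_Q_positiveD(2)[OF M] by blast
qed

lemma Q_positive_translate: "Q_positive Q A \<Longrightarrow> Q_positive Q ((\<lambda>a. a + x) ` A)"
  unfolding Q_positive_def by auto

lemma max_Q_positive_translate:
  assumes M: "max_Q_positive Q A"
  shows "max_Q_positive Q ((\<lambda>a. a + x) ` A)"
  unfolding max_Q_positive_def
proof (intro conjI allI impI)
  show "Q_positive Q ((\<lambda>a. a + x) ` A)" using Q_positive_translate max_Q_positiveD(1)[OF M] .
next
  fix A' assume A': "Q_positive Q A' \<and> (\<lambda>a. a + x) ` A \<subseteq> A'"
  have "A \<subseteq> (\<lambda>a. a + - x) ` A'"
  proof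
    fix a assume "a \<in> A"
    then have "a + x \<in> A'" using A' by blast
    then show "a \<in> (\<lambda>a. a + - x) ` A'" by (rule rev_image_eqI) simp
  qed
  then have "(\<lambda>a. a + - x) ` A' = A"
    using A' by (intro max_Q_positiveD(2)[OF M] Q_positive_translate) auto
  then show "A' = (\<lambda>a. a + x) ` A" by (auto simp: image_image)
qed

lemma Q_positive_extend_to_max:
  assumes "Q_positive Q S"
  obtains A where "max_Q_positive Q A" "S \<subseteq> A"
proof -
  let ?F = "{A. Q_positive Q A \<and> S \<subseteq> A}"
  have chain_bounded: "\<exists>U\<in>?F. \<forall>X\<in>C. X \<subseteq> U" if C: "C \<in> chains ?F" for C
  proof (cases "C = {}")
    case True then show ?thesis using assms by blast
  next
    case False
    have mem: "Q_positive Q X \<and> S \<subseteq> X" if "X \<in> C" for X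
      using C that by (simp add: chains_def subset_eq)
    obtain X0 where "X0 \<in> C" using False by blast
    have "Q_positive Q (\<Union>C)"
    proof (rule Q_positiveI)
      show "\<Union>C \<noteq> {}" using mem[OF \<open>X0 \<in> C\<close>] \<open>X0 \<in> C\<close> by (auto simp: Q_positive_def)
    next
      fix b c assume "b \<in> \<Union>C" "c \<in> \<Union>C"
      then obtain X Y where XY: "X \<in> C" "Y \<in> C" "b \<in> X" "c \<in> Y" by blast
      moreover have "X \<subseteq> Y \<or> Y \<subseteq> X"
        using C \<open>X \<in> C\<close> \<open>Y \<in> C\<close> by (simp add: chains_def chain_subset_def)
      ultimately show "0 \<le> Q (b - c)"
        using mem[of X] mem[of Y] Q_positiveD by blast
    qed
    moreover have "S \<subseteq> \<Union>C" using mem[OF \<open>X0 \<in> C\<close>] \<open>X0 \<in> C\<close> by blast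
    ultimately show ?thesis by blast
  qed
  have "\<exists>M\<in>?F. \<forall>X\<in>?F. M \<subseteq> X \<longrightarrow> X = M"
    by (rule Zorn_Lemma2) (use chain_bounded in blast)
  then obtain M where "Q_positive Q M" "S \<subseteq> M" "\<And>X. Q_positive Q X \<Longrightarrow> S \<subseteq> X \<Longrightarrow> M \<subseteq> X \<Longrightarrow> X = M"
    by auto
  then have "max_Q_positive Q M"
    unfolding max_Q_positive_def by blast
  then show ?thesis using that \<open>S \<subseteq> M\<close> by blast
qed

lemma max_Q_positive_if_setsum_UNIV:
  assumes QA: "Q_positive Q A" and sum: "setsum A C = UNIV" and "p \<in> C"
    and neg: "\<forall>z\<in>C - {p}. Q (z - p) < 0"
  shows "max_Q_positive Q A"
  unfolding max_Q_positive_def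
proof (intro conjI allI impI QA)
  fix A' assume A': "Q_positive Q A' \<and> A \<subseteq> A'"
  have "b \<in> A" if "b \<in> A'" for b
  proof -
    have "b + p \<in> setsum A C" using sum by simp
    then obtain a c where ac: "a \<in> A" "c \<in> C" "b + p = a + c"
      unfolding setsum_def by blast
    then have "b - a = c - p" by (simp add: algebra_simps)
    moreover have "0 \<le> Q (b - a)" using A' \<open>b \<in> A'\<close> ac(1) Q_positiveD by blast
    ultimately have "\<not> Q (c - p) < 0" by simp
    then have "c = p" using neg ac(2) by blast
    then show "b \<in> A" using ac by simp
  qed
  then show "A' = A" using A' by blast
qed

section \<open>SSDB spaces\<close>

lemma quadratic_nonneg_imp_discriminant_le:
  fixes a b c :: real
  assumes nonneg: "\<And>t. 0 \<le> a * t ^ 2 + b * t + c"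
  shows "b ^ 2 \<le> 4 * a * c"
proof -
  consider "a > 0" | "a = 0" | "a < 0" by linarith
  then show ?thesis
  proof cases
    case 1
    have "0 \<le> a * (- b / (2 * a)) ^ 2 + b * (- b / (2 * a)) + c" by (rule nonneg)
    also have "\<dots> = (4 * a * c - b ^ 2) / (4 * a)"
      using 1 by (simp add: power2_eq_square field_simps)
    finally show ?thesis using 1 by (simp add: zero_le_divide_iff)
  next
    case 2
    have "b = 0"
    proof (rule ccontr)
      assume "b \<noteq> 0"
      then have "b * (- (\<bar>c\<bar> + 1) / b) + c < 0" by simp
      then show False using nonneg[of "- (\<bar>c\<bar> + 1) / b"] 2 by simp
    qed
    then show ?thesis using 2 by simp
  next
    case 3
    define t where "t = sqrt ((\<bar>c\<bar> + 1) / - a)"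
    have "t ^ 2 = (\<bar>c\<bar> + 1) / - a" using 3 by (simp add: t_def divide_nonneg_neg)
    then have "a * t ^ 2 = - (\<bar>c\<bar> + 1)" using 3 by (simp add: field_simps)
    moreover have "0 \<le> a * t ^ 2 + b * t + c" "0 \<le> a * (- t) ^ 2 + b * (- t) + c"
      by (rule nonneg)+
    ultimately show ?thesis by (simp add: abs_if split: if_splits)
  qed
qed

locale SSDB_space =
  fixes s :: "'a::banach \<Rightarrow> 'a \<Rightarrow> real"
  assumes SSDB: "SSDB s"
begin

abbreviation q :: "'a \<Rightarrow> real" where "q \<equiv> qform s"

lemma bilinear_s: "bilinear s" and s_commute: "s x y = s y x"
  using SSDB unfolding SSDB_def SSD_def by auto

lemma s_simps [simp]:
  "s (x + y) z = s x z + s y z" "s x (y + z) = s x y + s x z"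
  "s (x - y) z = s x z - s y z" "s x (y - z) = s x y - s x z"
  "s (- x) y = - s x y" "s x (- y) = - s x y"
  "s (c *\<^sub>R x) y = c * s x y" "s x (c *\<^sub>R y) = c * s x y"
  "s 0 y = 0" "s x 0 = 0"
  using bilinear_ladd[OF bilinear_s] bilinear_radd[OF bilinear_s]
    bilinear_lsub[OF bilinear_s] bilinear_rsub[OF bilinear_s]
    bilinear_lneg[OF bilinear_s] bilinear_rneg[OF bilinear_s]
    bilinear_lmul[OF bilinear_s] bilinear_rmul[OF bilinear_s]
    bilinear_lzero[OF bilinear_s] bilinear_rzero[OF bilinear_s]
  by auto

lemma bounded_linear_s: "bounded_linear (\<lambda>x. s x y)"
  and onorm_s: "onorm (\<lambda>x. s x y) = norm y"
  and bounded_linear_represented: "bounded_linear f \<Longrightarrow> \<exists>y. f = (\<lambda>x. s x y)"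
  using SSDB unfolding SSDB_def by auto

lemma q_diff: "q (x - y) = q x - s x y + q y"
  and q_add: "q (x + y) = q x + s x y + q y"
  and q_uminus [simp]: "q (- x) = q x"
  and q_scaleR: "q (c *\<^sub>R x) = c ^ 2 * q x"
  and q_zero [simp]: "q 0 = 0"
  unfolding qform_def by (simp_all add: s_commute[of y x] power2_eq_square field_simps)

lemma q_diff_commute: "q (x - y) = q (y - x)"
  by (metis minus_diff_eq q_uminus)

lemma s_s_eq: "s x x = 2 * q x"
  by (simp add: qform_def)

lemma abs_s_le: "\<bar>s x y\<bar> \<le> norm x * norm y"
  using onorm[OF bounded_linear_s[of y], of x] onorm_s[of y] by (simp add: mult.commute)

lemma q_ge_neg_half_norm_square: "- ((norm x) ^ 2 / 2) \<le> q x"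
  using abs_s_le[of x x] unfolding qform_def by (simp add: power2_eq_square abs_le_iff)

lemma s_nondegenerate:
  assumes "\<And>x. s x z = 0"
  shows "z = 0"
proof -
  have "(\<lambda>x. s x z) = (\<lambda>x. 0)" using assms by simp
  then show ?thesis using onorm_s[of z] onorm_zero by (metis norm_eq_zero)
qed

lemma s_square_le_q_mult_q:
  assumes "\<And>t. 0 \<le> q (x - t *\<^sub>R y)"
  shows "(s x y) ^ 2 \<le> 4 * q y * q x"
proof -
  have "(- s x y) ^ 2 \<le> 4 * q y * q x"
  proof (rule quadratic_nonneg_imp_discriminant_le)
    show "0 \<le> q y * t ^ 2 + - s x y * t + q x" for t
      using assms[of t] by (simp add: q_diff q_scaleR algebra_simps)
  qed
  then show ?thesis by simp
qed

lemma SSDB_space_uminus: "SSDB_space (\<lambda>x y. - s x y)"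
proof -
  have "bilinear (\<lambda>x y. - s x y)"
    using bilinear_s unfolding bilinear_def by (auto intro: linear_compose_neg)
  moreover have "\<exists>b. f = (\<lambda>x. - s x b)" if "bounded_linear f" for f :: "'a \<Rightarrow> real"
    using bounded_linear_represented[OF bounded_linear_minus[OF that]] by (metis minus_minus)
  ultimately show ?thesis
    using SSDB bounded_linear_minus[OF bounded_linear_s] onorm_neg[of "\<lambda>x. s x y" for y]
    unfolding SSDB_space_def SSDB_def SSD_def by (auto simp: onorm_s s_commute)
qed

lemma qform_uminus: "qform (\<lambda>x y. - s x y) = (\<lambda>b. - q b)"
  by (auto simp: qform_def)

lemma max_q_positive_ex_ge:
  assumes M: "max_Q_positive q A"
  obtains a where "a \<in> A" "q b \<le> s b a - q a"
proof (cases "b \<in> A")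
  case True
  then show ?thesis using that[OF True] by (simp add: s_s_eq)
next
  case False
  then have "\<not> (\<forall>a\<in>A. 0 \<le> q (b - a) \<and> 0 \<le> q (a - b))"
    using max_Q_positive_memI[OF M, of b] by auto
  then obtain a where "a \<in> A" "\<not> (0 \<le> q (b - a) \<and> 0 \<le> q (a - b))" by blast
  then have "q (b - a) < 0" using q_diff_commute[of a b] by linarith
  then show ?thesis using that[OF \<open>a \<in> A\<close>] by (simp add: q_diff)
qed

text \<open>\<open>\<Psi>\<close> is the function \<open>\<Phi>\<^sub>q\<^sub>,\<^sub>A\<close> of the paper, restricted to the convex set where it is finite.\<close>
lemma max_q_positive_Phi:
  assumes M: "max_Q_positive q A"
  obtains D \<Psi> where "convex D" "convex_on D \<Psi>" "A \<subseteq> D" "\<And>a. a \<in> A \<Longrightarrow> \<Psi> a \<le> q a"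
    "\<And>b. b \<in> D \<Longrightarrow> q b \<le> \<Psi> b" "\<And>a b. b \<in> D \<Longrightarrow> a \<in> A \<Longrightarrow> s b a - q a \<le> \<Psi> b"
proof -
  define D where "D = {b. bdd_above ((\<lambda>a. s b a - q a) ` A)}"
  define \<Psi> where "\<Psi> b = (SUP a\<in>A. s b a - q a)" for b
  have QA: "Q_positive q A" using max_Q_positiveD(1)[OF M] .
  then have "A \<noteq> {}" by (simp add: Q_positive_def)
  have upper: "s b a - q a \<le> \<Psi> b" if "b \<in> D" "a \<in> A" for a b
    unfolding \<Psi>_def using that D_def by (intro cSUP_upper) auto
  have least: "b \<in> D \<and> \<Psi> b \<le> K" if "\<And>a. a \<in> A \<Longrightarrow> s b a - q a \<le> K" for b K
  proof
    show "b \<in> D" unfolding D_def using that by (intro CollectI bdd_aboveI2)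
    show "\<Psi> b \<le> K" unfolding \<Psi>_def using \<open>A \<noteq> {}\<close> that by (rule cSUP_least)
  qed
  have A_le: "a \<in> D \<and> \<Psi> a \<le> q a" if "a \<in> A" for a
  proof (rule least)
    fix a' assume "a' \<in> A"
    show "s a a' - q a' \<le> q a" using Q_positiveD[OF QA that \<open>a' \<in> A\<close>] by (simp add: q_diff)
  qed
  have comb: "(1-u) *\<^sub>R b1 + u *\<^sub>R b2 \<in> D \<and> \<Psi> ((1-u) *\<^sub>R b1 + u *\<^sub>R b2) \<le> (1-u) * \<Psi> b1 + u * \<Psi> b2"
    if "b1 \<in> D" "b2 \<in> D" "0 \<le> u" "u \<le> 1" for b1 b2 u
  proof (rule least)
    fix a assume "a \<in> A"
    have "s ((1-u) *\<^sub>R b1 + u *\<^sub>R b2) a - q a = (1-u) * (s b1 a - q a) + u * (s b2 a - q a)"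
      by (simp add: algebra_simps)
    also have "\<dots> \<le> (1-u) * \<Psi> b1 + u * \<Psi> b2"
      using upper[OF \<open>b1 \<in> D\<close> \<open>a \<in> A\<close>] upper[OF \<open>b2 \<in> D\<close> \<open>a \<in> A\<close>] that
      by (intro add_mono mult_left_mono) auto
    finally show "s ((1-u) *\<^sub>R b1 + u *\<^sub>R b2) a - q a \<le> (1-u) * \<Psi> b1 + u * \<Psi> b2" .
  qed
  have "q b \<le> \<Psi> b" if "b \<in> D" for b
  proof -
    obtain a where "a \<in> A" "q b \<le> s b a - q a" using max_q_positive_ex_ge[OF M] .
    then show ?thesis using upper[OF that \<open>a \<in> A\<close>] by linarith
  qed
  moreover have "convex D" using comb by (auto simp: convex_alt)
  moreover have "convex_on D \<Psi>" using comb \<open>convex D\<close> by (intro convex_onI) auto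
  ultimately show ?thesis using that upper A_le by blast
qed

lemma max_q_positive_inf_convolution:
  assumes M: "max_Q_positive q A" and g: "convex_on UNIV g" and g_ge: "\<And>b. - q b \<le> g b"
  obtains \<phi> where "convex_on UNIV \<phi>" "0 \<le> \<phi> 0" "\<And>a x. a \<in> A \<Longrightarrow> \<phi> x \<le> q a + g (a - x)"
proof -
  obtain D \<Psi> where D: "convex D" "convex_on D \<Psi>" "A \<subseteq> D" "\<And>a. a \<in> A \<Longrightarrow> \<Psi> a \<le> q a"
    "\<And>b. b \<in> D \<Longrightarrow> q b \<le> \<Psi> b"
    using max_q_positive_Phi[OF M] by metis
  obtain a0 where "a0 \<in> A" using max_Q_positiveD(1)[OF M] by (auto simp: Q_positive_def)
  have "a0 \<in> D" using D(3) \<open>a0 \<in> A\<close> by blast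
  have lower: "- (\<Psi> b' + g (b' + x)) \<le> \<Psi> b + g (b - x)" if "b \<in> D" "b' \<in> D" for b b' x
  proof -
    define m where "m = (1/2) *\<^sub>R (b + b')"
    have "m \<in> D" "2 * \<Psi> m \<le> \<Psi> b + \<Psi> b'"
      using convexD[OF D(1) that, of "1/2" "1/2"] convex_onD[OF D(2), of "1/2" b b'] that
      by (simp_all add: m_def scaleR_add_right)
    moreover have "2 * g m \<le> g (b - x) + g (b' + x)"
      using convex_on_UNIV_midpoint[OF g, of "b - x" "b' + x"] by (simp add: m_def)
    ultimately show ?thesis using D(5) g_ge[of m] by force
  qed
  define \<phi> where "\<phi> x = (INF b\<in>D. \<Psi> b + g (b - x))" for x
  have bdd: "bdd_below ((\<lambda>b. \<Psi> b + g (b - x)) ` D)" for x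
    using lower[OF _ \<open>a0 \<in> D\<close>] by (intro bdd_belowI2)
  have "\<phi> x \<le> q a + g (a - x)" if "a \<in> A" for a x
    using cINF_lower[OF bdd, of a x] D(3,4) that unfolding \<phi>_def by force
  moreover have "0 \<le> \<phi> 0"
    unfolding \<phi>_def
  proof (rule cINF_greatest)
    show "D \<noteq> {}" using \<open>a0 \<in> D\<close> by blast
    show "0 \<le> \<Psi> b + g (b - 0)" if "b \<in> D" for b using D(5)[OF that] g_ge[of b] by simp
  qed
  moreover have "convex_on UNIV \<phi>"
    unfolding \<phi>_def using D(1,2) g \<open>a0 \<in> D\<close> bdd by (intro convex_on_inf_convolution) auto
  ultimately show ?thesis using that by blast
qed

text \<open>The sandwich step: a Hahn-Banach minorant of \<open>\<phi>\<close>, bounded near \<open>0\<close> because \<open>g\<close> is, is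
  represented by some \<open>y\<close>.\<close>
lemma sandwich:
  assumes M: "max_Q_positive q A" and g: "convex_on UNIV g" and "r > 0"
    and g_bounded: "\<And>x. norm x < r \<Longrightarrow> g x \<le> G" and g_ge: "\<And>b. - q b \<le> g b"
  obtains y where "\<And>a b. a \<in> A \<Longrightarrow> s a y - s b y \<le> q a + g b"
proof -
  obtain \<phi> where \<phi>: "convex_on UNIV \<phi>" "0 \<le> \<phi> 0" "\<And>a x. a \<in> A \<Longrightarrow> \<phi> x \<le> q a + g (a - x)"
    using max_q_positive_inf_convolution[OF M g g_ge] by blast
  obtain L where L: "linear L" "\<And>x. L x \<le> \<phi> x - \<phi> 0"
    using convex_on_linear_minorant[OF \<phi>(1)] by blast
  obtain a0 where "a0 \<in> A" using max_Q_positiveD(1)[OF M] by (auto simp: Q_positive_def)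
  have L_bound: "2 * L x \<le> 2 * q a0 + g (2 *\<^sub>R a0) + G" if "norm x < r / 2" for x
  proof -
    have "2 * g (a0 - x) \<le> g (2 *\<^sub>R a0) + g (- 2 *\<^sub>R x)"
      using convex_on_UNIV_midpoint[OF g, of "2 *\<^sub>R a0" "- 2 *\<^sub>R x"] by (simp add: algebra_simps)
    moreover have "g (- 2 *\<^sub>R x) \<le> G" using g_bounded that by simp
    ultimately show ?thesis using L(2)[of x] \<phi>(2) \<phi>(3)[OF \<open>a0 \<in> A\<close>, of x] by linarith
  qed
  have "bounded_linear L"
  proof (rule bounded_linear_if_bounded_above_on_ball[OF L(1)])
    show "r / 2 > 0" using \<open>r > 0\<close> by simp
    show "L x \<le> (2 * q a0 + g (2 *\<^sub>R a0) + G) / 2" if "norm x < r / 2" for x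
      using L_bound[OF that] by simp
  qed
  then obtain y where y: "L = (\<lambda>x. s x y)" using bounded_linear_represented by blast
  have "s a y - s b y \<le> q a + g b" if "a \<in> A" for a b
    using L(2)[of "a - b"] \<phi>(2) \<phi>(3)[OF that, of "a - b"] by (simp add: y)
  then show ?thesis using that by blast
qed

lemma max_q_positive_ex_q_eq_neg_half_norm_square:
  assumes M: "max_Q_positive q A"
  obtains a where "a \<in> A" "q a = - ((norm a) ^ 2 / 2)"
proof -
  have "(norm x) ^ 2 / 2 \<le> 1 / 2" if "norm x < 1" for x :: 'a
    using that by (simp add: power_le_one)
  then obtain y where y: "\<And>a b. a \<in> A \<Longrightarrow> s a y - s b y \<le> q a + (norm b) ^ 2 / 2"
    using sandwich[OF M convex_on_half_norm_square zero_less_one] q_ge_neg_half_norm_square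
    by (metis add.inverse_inverse le_minus_iff)
  have bound: "s a y - q a \<le> - ((norm y) ^ 2 / 2)" if "a \<in> A" for a
    using linear_plus_half_norm_square_lower_bound[OF bounded_linear_s, of "s a y - q a"] y[OF that]
    by (simp add: onorm_s algebra_simps)
  have "y \<in> A"
  proof (rule max_Q_positive_memI[OF M])
    fix a assume "a \<in> A"
    have "q (y - a) = q y - (s a y - q a)" by (simp add: q_diff s_commute)
    then have "0 \<le> q (y - a)"
      using bound[OF \<open>a \<in> A\<close>] q_ge_neg_half_norm_square[of y] by linarith
    then show "0 \<le> q (y - a) \<and> 0 \<le> q (a - y)" by (simp add: q_diff_commute)
  qed simp
  then have "q y = - ((norm y) ^ 2 / 2)"
    using bound q_ge_neg_half_norm_square[of y] by (fastforce simp: s_s_eq)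
  then show ?thesis using that \<open>y \<in> A\<close> by blast
qed

lemma max_q_positive_ex_q_diff_eq_neg_half_norm_square:
  assumes "max_Q_positive q A"
  obtains a where "a \<in> A" "q (a - x) = - ((norm (a - x)) ^ 2 / 2)"
proof -
  obtain a' where "a' \<in> (\<lambda>a. a + - x) ` A" "q a' = - ((norm a') ^ 2 / 2)"
    using max_q_positive_ex_q_eq_neg_half_norm_square[OF max_Q_positive_translate[OF assms]] .
  then show ?thesis using that by auto
qed

lemma Q_positive_half_norm_square_set: "Q_positive q {a. q a = (norm a) ^ 2 / 2}"
proof (rule Q_positiveI)
  have "0 \<in> {a. q a = (norm a) ^ 2 / 2}" by simp
  then show "{a. q a = (norm a) ^ 2 / 2} \<noteq> {}" by blast
next
  fix b c assume "b \<in> {a. q a = (norm a) ^ 2 / 2}" "c \<in> {a. q a = (norm a) ^ 2 / 2}"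
  then have "2 * q (b - c) = (norm b) ^ 2 + (norm c) ^ 2 - 2 * s b c" by (simp add: q_diff)
  moreover have "2 * (norm b * norm c) \<le> (norm b) ^ 2 + (norm c) ^ 2"
    using sum_squares_bound[of "norm b" "norm c"] by simp
  ultimately show "0 \<le> q (b - c)" using abs_s_le[of b c] by linarith
qed

text \<open>Argue in the SSDB space with form \<open>-s\<close>: a maximally \<open>(-q)\<close>-positive set through the line
  \<open>\<real>z\<close> is \<open>s\<close>-orthogonal to \<open>z\<close> and, translated by any \<open>x\<close>, meets the set where \<open>q = \<parallel>\<cdot>\<parallel>\<^sup>2/2\<close>.\<close>
lemma isotropic_orthogonal_half_norm_square_set_eq_0:
  assumes "q z = 0" and orth: "\<And>a. q a = (norm a) ^ 2 / 2 \<Longrightarrow> s z a = 0"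
  shows "z = 0"
proof -
  interpret neg: SSDB_space "\<lambda>x y. - s x y" by (rule SSDB_space_uminus)
  have "Q_positive neg.q (range (\<lambda>t. t *\<^sub>R z))"
    by (rule Q_positiveI) (auto simp: qform_uminus q_scaleR \<open>q z = 0\<close> scaleR_diff_left[symmetric])
  then obtain D where D: "max_Q_positive neg.q D" "range (\<lambda>t. t *\<^sub>R z) \<subseteq> D"
    by (rule Q_positive_extend_to_max)
  have orth_D: "s d z = 0" if "d \<in> D" for d
  proof -
    have "0 \<le> neg.q (d - t *\<^sub>R z)" for t
      using Q_positiveD[OF max_Q_positiveD(1)[OF D(1)] that] D(2) by blast
    then have "(- s d z) ^ 2 \<le> 4 * neg.q z * neg.q d" by (rule neg.s_square_le_q_mult_q)
    then show ?thesis using \<open>q z = 0\<close> by (simp add: qform_uminus)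
  qed
  have "s x z = 0" for x
  proof -
    obtain d where "d \<in> D" "neg.q (d - x) = - ((norm (d - x)) ^ 2 / 2)"
      using neg.max_q_positive_ex_q_diff_eq_neg_half_norm_square[OF D(1)] .
    then have "q (d - x) = (norm (d - x)) ^ 2 / 2" by (simp add: qform_uminus)
    then have "s z (d - x) = 0" by (rule orth)
    then show ?thesis using orth_D[OF \<open>d \<in> D\<close>] by (simp add: s_commute)
  qed
  then show ?thesis by (rule s_nondegenerate)
qed

lemma ex_max_q_positive_pos:
  obtains A where "max_Q_positive q A" "0 \<in> A" "\<And>a. a \<in> A \<Longrightarrow> a \<noteq> 0 \<Longrightarrow> 0 < q a"
proof -
  let ?A0 = "{a. q a = (norm a) ^ 2 / 2}"
  obtain A where A: "max_Q_positive q A" "?A0 \<subseteq> A"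
    using Q_positive_half_norm_square_set by (rule Q_positive_extend_to_max)
  have "0 \<in> A" using A(2) by force
  have "0 < q z" if "z \<in> A" "z \<noteq> 0" for z
  proof (rule ccontr)
    assume "\<not> 0 < q z"
    then have "q z = 0" using Q_positiveD[OF max_Q_positiveD(1)[OF A(1)] that(1) \<open>0 \<in> A\<close>] by simp
    have "s z a = 0" if "q a = (norm a) ^ 2 / 2" for a
    proof -
      have "t *\<^sub>R a \<in> ?A0" for t using that by (simp add: q_scaleR power_mult_distrib)
      then have "0 \<le> q (z - t *\<^sub>R a)" for t
        using Q_positiveD[OF max_Q_positiveD(1)[OF A(1)] \<open>z \<in> A\<close>] A(2) by blast
      then have "(s z a) ^ 2 \<le> 4 * q a * q z" by (rule s_square_le_q_mult_q)
      then show ?thesis using \<open>q z = 0\<close> by simp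
    qed
    then show False using isotropic_orthogonal_half_norm_square_set_eq_0 \<open>q z = 0\<close> \<open>z \<noteq> 0\<close> by blast
  qed
  then show ?thesis using that A(1) \<open>0 \<in> A\<close> by blast
qed

lemma max_neg_q_positive_eq_neg_half_norm_square:
  assumes C: "max_Q_positive (\<lambda>b. - q b) C" and C0: "{c. - q c = (norm c) ^ 2 / 2} \<subseteq> C"
    and "z \<in> C"
  shows "q z = - ((norm z) ^ 2 / 2)"
proof -
  obtain A where A: "max_Q_positive q A" "\<And>a. a \<in> A \<Longrightarrow> a \<noteq> 0 \<Longrightarrow> 0 < q a"
    using ex_max_q_positive_pos by metis
  obtain a where "a \<in> A" and a: "q (a - z) = - ((norm (a - z)) ^ 2 / 2)"
    using max_q_positive_ex_q_diff_eq_neg_half_norm_square[OF A(1)] .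
  have "- q (z - a) = (norm (z - a)) ^ 2 / 2"
    using a by (simp add: q_diff_commute[of z a] norm_minus_commute)
  then have "z - a \<in> C" using C0 by blast
  then have "0 \<le> - q (z - (z - a))" using Q_positiveD[OF max_Q_positiveD(1)[OF C] \<open>z \<in> C\<close>] by blast
  then have "a = 0" using A(2)[OF \<open>a \<in> A\<close>] by force
  then show ?thesis using a by simp
qed

lemma Phi_negq_le_half_norm_square:
  assumes "\<And>c. c \<in> C \<Longrightarrow> q c = - ((norm c) ^ 2 / 2)"
  shows "Phi_negq s C x \<le> ereal ((norm x) ^ 2 / 2)"
  unfolding Phi_negq_def
proof (rule SUP_least)
  fix c assume "c \<in> C"
  have "2 * q c = - ((norm c) ^ 2)" using assms[OF \<open>c \<in> C\<close>] by simp
  moreover have "2 * (norm x * norm c) \<le> (norm x) ^ 2 + (norm c) ^ 2"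
    using sum_squares_bound[of "norm x" "norm c"] by simp
  ultimately have "2 * (- s x c + q c) \<le> (norm x) ^ 2" using abs_s_le[of x c] abs_ge_minus_self[of "s x c"] by (smt (verit))
  then show "ereal (- s x c + q c) \<le> ereal ((norm x) ^ 2 / 2)" by simp
qed

lemma ex_max_neg_q_positive_witness:
  obtains C where "max_Q_positive (\<lambda>b. - q b) C" "0 \<in> C" "\<forall>z\<in>C - {0}. q (z - 0) < 0"
    "\<forall>x. Phi_negq s C x < \<infinity>"
proof -
  interpret neg: SSDB_space "\<lambda>x y. - s x y" by (rule SSDB_space_uminus)
  let ?C0 = "{c. - q c = (norm c) ^ 2 / 2}"
  obtain C where C: "max_Q_positive (\<lambda>b. - q b) C" "?C0 \<subseteq> C"
    using neg.Q_positive_half_norm_square_set unfolding qform_uminus by (rule Q_positive_extend_to_max)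
  have q_C: "q z = - ((norm z) ^ 2 / 2)" if "z \<in> C" for z
    using max_neg_q_positive_eq_neg_half_norm_square[OF C that] .
  have "0 \<in> C" using C(2) by force
  moreover have "\<forall>z\<in>C - {0}. q (z - 0) < 0" using q_C by simp
  moreover have "Phi_negq s C x < \<infinity>" for x
  proof (rule le_less_trans)
    show "Phi_negq s C x \<le> ereal ((norm x) ^ 2 / 2)" using q_C by (rule Phi_negq_le_half_norm_square)
  qed simp
  ultimately show ?thesis using that C(1) by blast
qed

lemma Phi_negq_finite_bdd_above:
  assumes fin: "\<forall>x. Phi_negq s C x < \<infinity>" and "c0 \<in> C"
  shows "bdd_above ((\<lambda>c. s b c + q c) ` C)"
proof -
  have le: "ereal (s b c + q c) \<le> Phi_negq s C (- b)" if "c \<in> C" for c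
    using SUP_upper[OF that, of "\<lambda>c. ereal (- s (- b) c + q c)"] by (simp add: Phi_negq_def)
  have "\<bar>Phi_negq s C (- b)\<bar> \<noteq> \<infinity>" using fin le[OF \<open>c0 \<in> C\<close>] by auto
  then obtain R where "Phi_negq s C (- b) = ereal R" by force
  then show ?thesis using le by (intro bdd_aboveI2[where M = R]) simp
qed

lemma max_neg_q_positive_SUP_ge:
  assumes C: "max_Q_positive (\<lambda>b. - q b) C" and bdd: "bdd_above ((\<lambda>c. s b c + q c) ` C)"
  shows "- q b \<le> (SUP c\<in>C. s b c + q c)"
proof -
  interpret neg: SSDB_space "\<lambda>x y. - s x y" by (rule SSDB_space_uminus)
  obtain c where "c \<in> C" "neg.q (- b) \<le> - s (- b) c - neg.q c"
    using neg.max_q_positive_ex_ge[OF C[folded qform_uminus]] .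
  then show ?thesis using cSUP_upper[OF \<open>c \<in> C\<close> bdd] by (simp add: qform_uminus)
qed

lemma max_q_positive_pair_common_point:
  assumes A: "max_Q_positive q A" and C: "max_Q_positive (\<lambda>b. - q b) C"
    and sep: "\<And>a c. a \<in> A \<Longrightarrow> c \<in> C \<Longrightarrow> (s a y - q a) + (s c y + q c) \<le> 0"
  shows "y \<in> A" "- y \<in> C"
proof -
  have minus_y_C: "- y \<in> C" if "\<And>c. c \<in> C \<Longrightarrow> s c y + q c \<le> - q y"
  proof (rule max_Q_positive_memI[OF C])
    fix c assume "c \<in> C"
    have "q (- y - c) = q y + (s c y + q c)"
      using q_uminus[of "y + c"] by (simp add: q_add s_commute)
    then have "0 \<le> - q (- y - c)" using that[OF \<open>c \<in> C\<close>] by linarith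
    then show "0 \<le> - q (- y - c) \<and> 0 \<le> - q (c - - y)" using q_diff_commute[of c "- y"] by simp
  qed simp
  have A_le: "s a y - q a \<le> q y" if "a \<in> A" for a
  proof (rule ccontr)
    assume "\<not> s a y - q a \<le> q y"
    then have "- y \<in> C" using sep[OF that] by (intro minus_y_C) fastforce
    then show False using sep[OF that] \<open>\<not> s a y - q a \<le> q y\<close> by (fastforce simp: s_s_eq)
  qed
  show "y \<in> A"
  proof (rule max_Q_positive_memI[OF A])
    fix a assume "a \<in> A"
    have "q (y - a) = q y - (s a y - q a)" by (simp add: q_diff s_commute[of y a])
    then have "0 \<le> q (y - a)" using A_le[OF \<open>a \<in> A\<close>] by linarith
    then show "0 \<le> q (y - a) \<and> 0 \<le> q (a - y)" by (simp add: q_diff_commute[of a])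
  qed simp
  then show "- y \<in> C"
    using sep by (intro minus_y_C) (fastforce simp: s_s_eq)
qed

text \<open>\<open>g(b) = \<Phi>\<^sub>-\<^sub>q\<^sub>,\<^sub>C(-b)\<close> is a finite convex lower semicontinuous function
  dominating \<open>-q\<close>, hence bounded near \<open>0\<close> by Baire; the sandwich lemma separates \<open>A\<close> from \<open>-C\<close>.\<close>
lemma max_q_positive_meets_uminus:
  assumes A: "max_Q_positive q A" and C: "max_Q_positive (\<lambda>b. - q b) C"
    and fin: "\<forall>x. Phi_negq s C x < \<infinity>"
  obtains y where "y \<in> A" "- y \<in> C"
proof -
  obtain c0 where "c0 \<in> C" using max_Q_positiveD(1)[OF C] by (auto simp: Q_positive_def)
  then have "C \<noteq> {}" by blast
  note bdd = Phi_negq_finite_bdd_above[OF fin \<open>c0 \<in> C\<close>]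
  define g where "g b = (SUP c\<in>C. s b c + q c)" for b
  have affine: "convex_on UNIV (\<lambda>b. s b c + q c)" for c
    by (rule convex_onI) (simp_all add: algebra_simps)
  have "convex_on UNIV g" unfolding g_def using \<open>C \<noteq> {}\<close> affine bdd by (rule convex_on_SUP)
  have continuous: "continuous_on UNIV (\<lambda>b. s b c + q c)" for c
    using linear_continuous_on[OF bounded_linear_s] by (intro continuous_intros)
  have "closed {x. g x \<le> n}" for n
    unfolding g_def using \<open>C \<noteq> {}\<close> continuous bdd by (rule closed_sublevel_SUP)
  with \<open>convex_on UNIV g\<close> obtain G r where G: "r > 0" "\<And>x. norm x < r \<Longrightarrow> g x \<le> G"
    using convex_on_bounded_near_0 by blast
  have "- q b \<le> g b" for b unfolding g_def using C bdd by (rule max_neg_q_positive_SUP_ge)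
  with sandwich[OF A \<open>convex_on UNIV g\<close> G] obtain y
    where y: "\<And>a b. a \<in> A \<Longrightarrow> s a y - s b y \<le> q a + g b"
    by blast
  have "g (- c) \<le> - q c" if "c \<in> C" for c
    unfolding g_def using \<open>C \<noteq> {}\<close>
  proof (rule cSUP_least)
    fix c' assume "c' \<in> C"
    show "s (- c) c' + q c' \<le> - q c"
      using Q_positiveD[OF max_Q_positiveD(1)[OF C] that \<open>c' \<in> C\<close>] by (simp add: q_diff)
  qed
  then have "(s a y - q a) + (s c y + q c) \<le> 0" if "a \<in> A" "c \<in> C" for a c
    using y[OF that(1), of "- c"] that(2) by fastforce
  then show ?thesis using that max_q_positive_pair_common_point[OF A C] by blast
qed

lemma max_q_positive_setsum_UNIV:
  assumes A: "max_Q_positive q A" and C: "max_Q_positive (\<lambda>b. - q b) C"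
    and fin: "\<forall>x. Phi_negq s C x < \<infinity>"
  shows "setsum A C = UNIV"
proof -
  have "x \<in> setsum A C" for x
  proof -
    obtain y where "y \<in> (\<lambda>a. a + - x) ` A" "- y \<in> C"
      using max_q_positive_meets_uminus[OF max_Q_positive_translate[OF A] C fin] .
    then obtain a where "a \<in> A" "x = a + - y" by auto
    then show ?thesis unfolding setsum_def using \<open>- y \<in> C\<close> by blast
  qed
  then show ?thesis by blast
qed

end

theorem mainTheorem14:
  fixes s :: "'a::banach \<Rightarrow> 'a \<Rightarrow> real" and A :: "'a set"
  assumes "SSDB s"
    and "Q_positive (qform s) A"
  shows "(max_Q_positive (qform s) A
            \<longleftrightarrow> (\<forall>C. max_Q_positive (\<lambda>b. - qform s b) C
                       \<and> (\<forall>x. Phi_negq s C x < \<infinity>)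
                     \<longrightarrow> setsum A C = UNIV))
       \<and> (max_Q_positive (qform s) A
            \<longleftrightarrow> (\<exists>C p. setsum A C = UNIV \<and> p \<in> C
                       \<and> (\<forall>z\<in>C - {p}. qform s (z - p) < 0)))"
proof -
  interpret SSDB_space s using assms(1) by (rule SSDB_space.intro)
  obtain C0 where C0: "max_Q_positive (\<lambda>b. - q b) C0" "0 \<in> C0" "\<forall>z\<in>C0 - {0}. q (z - 0) < 0"
    "\<forall>x. Phi_negq s C0 x < \<infinity>"
    by (rule ex_max_neg_q_positive_witness)
  have "max_Q_positive q A \<Longrightarrow> max_Q_positive (\<lambda>b. - q b) C \<Longrightarrow> \<forall>x. Phi_negq s C x < \<infinity>
      \<Longrightarrow> setsum A C = UNIV" for C
    by (rule max_q_positive_setsum_UNIV)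
  moreover have "setsum A C = UNIV \<Longrightarrow> p \<in> C \<Longrightarrow> \<forall>z\<in>C - {p}. q (z - p) < 0
      \<Longrightarrow> max_Q_positive q A" for C p
    by (rule max_Q_positive_if_setsum_UNIV[OF assms(2)])
  ultimately show ?thesis using C0 by blast
qed

end
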